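(* Let $K$ be a compact Hausdorff space and let $(f_n)_{n\in\mathbb{N}}$ be a pairwise disjoint sequence in $C_1(K)$. Suppose there exists a closed set $L\subseteq K$ such that $supp(f_n)\subseteq L$ for all $n\in\mathbb{N}$. Then $$K((f_n)_{n\in\mathbb{N}})=L((f_n|L)_{n\in\mathbb{N}})\cup\left(\overline{K\setminus L}\right)\times\{0\},$$ where $L((f_n|L)_{n\in\mathbb{N}})\subseteq L\times[0,1]$ is regarded as a subset of $K\times[0,1]$.
   Context: All spaces are Hausdorff. For a compact space $K$, $C_1(K)$ denotes the set of continuous functions $K\to[0,1]$; $f,g$ are disjoint if $f\cdot g=0$. For a real function $f$ on $K$, $supp(f)$ is the closure of $\{x\in K: f(x)\neq 0\}$. For a pairwise disjoint sequence $(f_n)_{n\in\mathbb{N}}$ in $C_1(K)$, let $D((f_n)_{n\in\mathbb{N}})$ be the union of all open sets $U\subseteq K$ such that $\{n: U\cap supp(f_n)\neq\emptyset\}$ is finite. The extension of $K$ by $(f_n)_{n\in\mathbb{N}}$, denoted $K((f_n)_{n\in\mathbb{N}})$, is the closure in $K\times[0,1]$ of the graph of the function $\sum_{n\in\mathbb{N}} f_n$ restricted to $D((f_n)_{n\in\mathbb{N}})$. *)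

theory Defs
  imports "HOL-Analysis.Analysis"
begin

text \<open>Real functions on K are
  functions 'a => real whose values outside topspace X are irrelevant.\<close>

definition C1 :: "'a topology \<Rightarrow> ('a \<Rightarrow> real) set" where
  "C1 X = {f. continuous_map X (top_of_set {0..1}) f}"

definition fdisjoint :: "'a topology \<Rightarrow> ('a \<Rightarrow> real) \<Rightarrow> ('a \<Rightarrow> real) \<Rightarrow> bool" where
  "fdisjoint X f g \<longleftrightarrow> (\<forall>x\<in>topspace X. f x * g x = 0)"

definition supp :: "'a topology \<Rightarrow> ('a \<Rightarrow> real) \<Rightarrow> 'a set" where
  "supp X f = X closure_of {x \<in> topspace X. f x \<noteq> 0}"

definition Dset :: "'a topology \<Rightarrow> (nat \<Rightarrow> 'a \<Rightarrow> real) \<Rightarrow> 'a set" where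
  "Dset X f = \<Union> {U. openin X U \<and> finite {n. U \<inter> supp X (f n) \<noteq> {}}}"

definition extension :: "'a topology \<Rightarrow> (nat \<Rightarrow> 'a \<Rightarrow> real) \<Rightarrow> ('a \<times> real) set" where
  "extension X f = (prod_topology X (top_of_set {0..1})) closure_of
      {(x, \<Sum>n. f n x) | x. x \<in> Dset X f}"

end

theory Submission
  imports Defs
begin

text \<open>Every \<open>f\<^sub>n\<close> vanishes off \<open>L\<close>, so the open set \<open>K - L\<close> lies in \<open>D((f\<^sub>n))\<close> and the
  graph of \<open>\<Sum> f\<^sub>n\<close> over it is \<open>(K - L) \<times> {0}\<close>; over \<open>L\<close> the graph is that of the restricted
  sequence, since \<open>D((f\<^sub>n|L)) = D((f\<^sub>n)) \<inter> L\<close>. Closure commutes with the union, and closures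
  inside the closed subspace \<open>L \<times> [0,1]\<close> agree with closures in \<open>K \<times> [0,1]\<close>.\<close>

lemma zero_outside_supp:
  assumes "x \<in> topspace X" and "x \<notin> supp X g"
  shows "g x = 0"
proof (rule ccontr)
  assume "g x \<noteq> 0"
  then have "x \<in> X closure_of {x \<in> topspace X. g x \<noteq> 0}"
    using assms(1) by (intro closure_of_subset[THEN subsetD]) auto
  then show False
    using assms(2) unfolding supp_def by simp
qed

lemma supp_subtopology:
  assumes "supp X g \<subseteq> L"
  shows "supp (subtopology X L) g = supp X g"
proof -
  have nonzero_in_L: "{x \<in> topspace X. g x \<noteq> 0} \<subseteq> L"
    using assms zero_outside_supp[of _ X g] by blast
  have "supp (subtopology X L) g = L \<inter> X closure_of (L \<inter> {x \<in> topspace X \<inter> L. g x \<noteq> 0})"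
    unfolding supp_def closure_of_subtopology by simp
  also have "L \<inter> {x \<in> topspace X \<inter> L. g x \<noteq> 0} = {x \<in> topspace X. g x \<noteq> 0}"
    using nonzero_in_L by blast
  finally show ?thesis
    using assms unfolding supp_def by blast
qed

lemma Dset_subset_topspace: "Dset X f \<subseteq> topspace X"
  unfolding Dset_def using openin_subset by blast

lemma Dset_subtopology:
  assumes "\<And>n. supp X (f n) \<subseteq> L"
  shows "Dset (subtopology X L) f = Dset X f \<inter> L"
proof
  show "Dset (subtopology X L) f \<subseteq> Dset X f \<inter> L"
  proof
    fix x assume "x \<in> Dset (subtopology X L) f"
    then obtain V where V: "openin X V" "x \<in> V \<inter> L"
      and fin: "finite {n. V \<inter> L \<inter> supp X (f n) \<noteq> {}}"
      unfolding Dset_def supp_subtopology[OF assms] by (auto simp: openin_subtopology)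
    have "V \<inter> L \<inter> supp X (f n) = V \<inter> supp X (f n)" for n
      using assms[of n] by auto
    with V fin show "x \<in> Dset X f \<inter> L"
      unfolding Dset_def by auto
  qed
next
  show "Dset X f \<inter> L \<subseteq> Dset (subtopology X L) f"
  proof
    fix x assume "x \<in> Dset X f \<inter> L"
    then obtain V where V: "openin X V" "x \<in> V \<inter> L"
      and fin: "finite {n. V \<inter> supp X (f n) \<noteq> {}}"
      unfolding Dset_def by blast
    have "finite {n. V \<inter> L \<inter> supp X (f n) \<noteq> {}}"
      by (rule finite_subset[OF _ fin]) blast
    moreover have "openin (subtopology X L) (V \<inter> L)"
      using V(1) by (auto simp: openin_subtopology)
    ultimately show "x \<in> Dset (subtopology X L) f"
      using V(2) unfolding Dset_def supp_subtopology[OF assms] by auto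
  qed
qed

lemma Dset_contains_complement:
  assumes "closedin X L" and "\<And>n. supp X (f n) \<subseteq> L"
  shows "topspace X - L \<subseteq> Dset X f"
proof -
  have "openin X (topspace X - L)"
    using assms(1) by auto
  moreover have "{n. (topspace X - L) \<inter> supp X (f n) \<noteq> {}} = {}"
    using assms(2) by blast
  ultimately show ?thesis
    unfolding Dset_def by (intro subsetI UnionI[of "topspace X - L"]) auto
qed

lemma closure_of_prod_subtopology:
  assumes "closedin X L" and "S \<subseteq> L \<times> UNIV"
  shows "prod_topology (subtopology X L) Y closure_of S = prod_topology X Y closure_of S"
proof -
  let ?P = "prod_topology X Y"
  have "?P closure_of S \<subseteq> ?P closure_of (L \<times> UNIV)"
    using assms(2) by (rule closure_of_mono)
  also have "\<dots> \<subseteq> L \<times> UNIV"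
    using assms(1) by (auto simp: closure_of_Times closure_of_closedin)
  finally have closure_in_L: "?P closure_of S \<subseteq> L \<times> UNIV" .
  have "prod_topology (subtopology X L) Y = subtopology ?P (L \<times> UNIV)"
    by (simp add: subtopology_Times)
  then have "prod_topology (subtopology X L) Y closure_of S
      = (L \<times> UNIV) \<inter> ?P closure_of ((L \<times> UNIV) \<inter> S)"
    by (simp only: closure_of_subtopology)
  also have "\<dots> = ?P closure_of S"
    using assms(2) closure_in_L by (metis Int_absorb1)
  finally show ?thesis .
qed

theorem lemma4p3:
  fixes X :: "'a topology" and f :: "nat \<Rightarrow> 'a \<Rightarrow> real" and L :: "'a set"
  assumes "compact_space X" and "Hausdorff_space X"
    and "\<And>n. f n \<in> C1 X"
    and "\<And>n m. n \<noteq> m \<Longrightarrow> fdisjoint X (f n) (f m)"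
    and "closedin X L"
    and "\<And>n. supp X (f n) \<subseteq> L"
  shows "extension X f =
           extension (subtopology X L) f \<union> (X closure_of (topspace X - L)) \<times> {0}"
proof -
  let ?I = "top_of_set {0..1::real}"
  define graph_L where "graph_L = {(x, \<Sum>n. f n x) | x. x \<in> Dset X f \<inter> L}"
  have "(\<Sum>n. f n x) = 0" if "x \<in> topspace X - L" for x
  proof -
    have "f n x = 0" for n
      using that assms(6)[of n] zero_outside_supp[of x X "f n"] by blast
    then show ?thesis by simp
  qed
  then have graph:
      "{(x, \<Sum>n. f n x) | x. x \<in> Dset X f} = graph_L \<union> (topspace X - L) \<times> {0}"
    unfolding graph_L_def
    using Dset_contains_complement[of X L f] assms(5,6) Dset_subset_topspace[of X f] by auto
  have "?I closure_of {0} = {0}"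
    by (rule closure_of_closedin) (auto simp: closedin_closed intro!: exI[of _ "{0}"])
  then have "extension X f
      = prod_topology X ?I closure_of graph_L \<union> (X closure_of (topspace X - L)) \<times> {0}"
    unfolding extension_def graph closure_of_Un closure_of_Times by simp
  moreover have "extension (subtopology X L) f = prod_topology X ?I closure_of graph_L"
    unfolding extension_def Dset_subtopology[OF assms(6)] graph_L_def
    by (rule closure_of_prod_subtopology[OF assms(5)]) auto
  ultimately show ?thesis by simp
qed

end
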